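(* Let $f\colon[0,\infty)\times\mathbb{N}_0\to[0,\infty)$ satisfy the contractive condition: there are constants $\kappa_1,\kappa_2\ge 0$ with $\kappa:=\kappa_1+\kappa_2<1$ such that $$|f(\lambda,y)-f(\lambda',y')|\le \kappa_1|\lambda-\lambda'|+\kappa_2|y-y'|\qquad\text{for all }\lambda,\lambda'\ge0,\ y,y'\in\mathbb{N}_0.$$ Consider the bivariate Markov chain $((N_t,\lambda_t))_{t\in\mathbb{N}}$ defined by: $\lambda_1\ge0$ is a (random or deterministic) starting value, $N_t\mid\mathcal{B}^{N,\lambda}_{t-1}\sim\mathrm{Poisson}(\lambda_t)$ and $\lambda_t=f(\lambda_{t-1},N_{t-1})$, where $\mathcal{B}^{N,\lambda}_t=\sigma(\lambda_1,\dots,\lambda_t,N_1,\dots,N_t)$. Then: (i) the chain has a unique stationary distribution $\pi$ (a probability measure on $\mathbb{N}_0\times[0,\infty)$); (ii) if $(N_1,\lambda_1)\sim\pi$, then $E\lambda_1<\infty$; (iii) if $f(0,0)=0$, then $\pi$ is the point mass at $(0,0)$; if $f(0,0)>0$, then $\pi(\{(y,\lambda)\})<1$ for every $y\in\mathbb{N}_0$, $\lambda\in[0,\infty)$, i.e. $\pi$ is not a point mass.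
   Context: $\mathbb{N}_0=\{0,1,2,\dots\}$. $\mathrm{Poisson}(0)$ denotes the point mass at $0$. The transition mechanism defines a time-homogeneous Markov chain on $\mathbb{N}_0\times[0,\infty)$. *)

theory Defs
  imports "HOL-Probability.Probability"
begin

definition pois :: "real \<Rightarrow> nat pmf" where
  "pois r = (if r \<le> 0 then return_pmf 0 else poisson_pmf r)"

text \<open>State space: pairs (N, lambda) in nat \<times> real (lambda \<ge> 0 on the relevant part),
  with the Borel sigma-algebra of nat \<times> real.\<close>
abbreviation SS :: "(nat \<times> real) measure" where
  "SS \<equiv> borel"

text \<open>The argument is clamped to [0,\<infinity>),
  which changes nothing on the state space nat \<times> [0,\<infinity>).\<close>
definition trans_kernel :: "(real \<Rightarrow> nat \<Rightarrow> real) \<Rightarrow> nat \<times> real \<Rightarrow> (nat \<times> real) measure" where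
  "trans_kernel f x =
     (let r = f (max 0 (snd x)) (fst x)
      in distr (measure_pmf (pois r)) SS (\<lambda>n. (n, r)))"

definition stationary :: "(real \<Rightarrow> nat \<Rightarrow> real) \<Rightarrow> (nat \<times> real) measure \<Rightarrow> bool" where
  "stationary f \<pi> \<longleftrightarrow>
     prob_space \<pi> \<and> sets \<pi> = sets SS \<and>
     emeasure \<pi> (UNIV \<times> {0..}) = 1 \<and>
     (\<forall>A\<in>sets SS. emeasure \<pi> A = (\<integral>\<^sup>+ x. emeasure (trans_kernel f x) A \<partial>\<pi>))"

end

theory Submission
  imports Defs
begin

(*
  The next state (N', lambda') depends on the current state only through
  lambda' = f(lambda, N), so everything reduces to the one-dimensional intensity chain with
  kernel  P s = law of f(s, N), N ~ Poisson(s).  Its action on test functions,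
  Phi h s = E h(f(s, N)), multiplies Lipschitz constants by kappa: the coupling
  Poisson(c) = Poisson(a) + Poisson(c - a) gives |Phi h c - Phi h a| <= kappa L |c - a|.
   - Uniqueness: integrals of Phi^k h against two invariant laws differ by O(kappa^k), so the
     laws agree on all bounded Lipschitz h, and such functions determine a law on the reals.
   - Existence: the iterates mu_k = delta_0 P^k have first moments at most f(0,0)/(1-kappa),
     hence are tight; a weak limit point is invariant since the increments
     E_{mu_(k+1)} h - E_{mu_k} h are O(kappa^k), and it inherits the moment bound.
  An invariant law nu of the intensity lifts to the stationary law nu >>= G of the pair chain
  (G s = Poisson(s) x delta_s), and every stationary law arises from its second marginal in this
  way; this gives (i) and (ii).  For (iii), if f(0,0) = 0 the point mass at (0,0) is stationary,
  and if f(0,0) > 0 an atom of full mass would have to be a fixed atom of the kernel, which a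
  Poisson count excludes.
*)

section \<open>Real distributions tested against bounded Lipschitz functions\<close>

lemma real_distributionI: "prob_space M \<Longrightarrow> sets M = sets borel \<Longrightarrow> real_distribution M"
  by (simp add: real_distribution_def real_distribution_axioms_def)

lemma measurable_borel_sets_cong:
  "sets M = sets borel \<Longrightarrow> K \<in> borel \<rightarrow>\<^sub>M N \<Longrightarrow> K \<in> M \<rightarrow>\<^sub>M N"
  using measurable_cong_sets[of M borel N N] by simp

definition bounded_lipschitz :: "real \<Rightarrow> real \<Rightarrow> (real \<Rightarrow> real) \<Rightarrow> bool" where
  "bounded_lipschitz B L h \<longleftrightarrow>
     L \<ge> 0 \<and> (\<forall>x. \<bar>h x\<bar> \<le> B) \<and> (\<forall>x y. \<bar>h x - h y\<bar> \<le> L * \<bar>x - y\<bar>)"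

lemma bounded_lipschitzD:
  assumes "bounded_lipschitz B L h"
  shows "L \<ge> 0" "\<bar>h x\<bar> \<le> B" "\<bar>h x - h y\<bar> \<le> L * \<bar>x - y\<bar>"
  using assms by (auto simp: bounded_lipschitz_def)

lemma bounded_lipschitz_isCont: "bounded_lipschitz B L h \<Longrightarrow> isCont h x"
proof -
  assume "bounded_lipschitz B L h"
  hence "L-lipschitz_on UNIV h"
    by (auto simp: bounded_lipschitz_def lipschitz_on_def dist_real_def)
  thus "isCont h x" using lipschitz_on_continuous_on continuous_on_eq_continuous_at by blast
qed

lemma bounded_lipschitz_measurable: "bounded_lipschitz B L h \<Longrightarrow> h \<in> borel_measurable borel"
  by (intro borel_measurable_continuous_onI continuous_at_imp_continuous_on ballI
      bounded_lipschitz_isCont)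

lemma bounded_lipschitz_integrable:
  assumes M: "real_distribution M" and h: "bounded_lipschitz B L h"
  shows "integrable M h"
proof -
  interpret real_distribution M by fact
  have "h \<in> borel_measurable M"
    by (rule measurable_borel_sets_cong[OF events_eq_borel bounded_lipschitz_measurable[OF h]])
  thus ?thesis using h by (intro integrable_const_bound[where B=B]) (auto simp: bounded_lipschitz_def)
qed

lemma integral_sub_value_at_0:
  assumes M: "real_distribution M" and h: "bounded_lipschitz B L h"
  shows "(\<integral>x. h x \<partial>M) - h 0 = (\<integral>x. h x - h 0 \<partial>M)"
proof -
  interpret real_distribution M by fact
  have "prob UNIV = 1" using prob_space by (simp add: space_eq_univ)
  thus ?thesis using bounded_lipschitz_integrable[OF M h] by simp
qed

lemma integral_deviation_le_moment:
  assumes M: "real_distribution M" and h: "bounded_lipschitz B c h"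
    and mom: "(\<integral>\<^sup>+x. ennreal \<bar>x\<bar> \<partial>M) \<le> ennreal C" and C: "C \<ge> 0"
  shows "\<bar>(\<integral>x. h x \<partial>M) - h 0\<bar> \<le> c * C"
proof -
  interpret real_distribution M by fact
  have c: "c \<ge> 0" using h by (simp add: bounded_lipschitz_def)
  have int: "integrable M (\<lambda>x. h x - h 0)" using bounded_lipschitz_integrable[OF M h] by simp
  have "ennreal \<bar>(\<integral>x. h x \<partial>M) - h 0\<bar> \<le> (\<integral>\<^sup>+x. norm (h x - h 0) \<partial>M)"
    unfolding integral_sub_value_at_0[OF M h] using integral_norm_bound_ennreal[OF int] by simp
  also have "\<dots> \<le> (\<integral>\<^sup>+x. ennreal c * ennreal \<bar>x\<bar> \<partial>M)"
  proof (rule nn_integral_mono)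
    fix x
    have "\<bar>h x - h 0\<bar> \<le> c * \<bar>x\<bar>" using bounded_lipschitzD(3)[OF h, of x 0] by simp
    thus "ennreal (norm (h x - h 0)) \<le> ennreal c * ennreal \<bar>x\<bar>"
      by (simp add: ennreal_mult'[OF c, symmetric] ennreal_leI)
  qed
  also have "\<dots> = ennreal c * (\<integral>\<^sup>+x. ennreal \<bar>x\<bar> \<partial>M)"
    by (rule nn_integral_cmult) (simp add: measurable_cong_sets[OF events_eq_borel refl])
  also have "\<dots> \<le> ennreal (c * C)"
    using mult_left_mono[OF mom] by (simp add: ennreal_mult'[OF c])
  finally show ?thesis using c C by (simp add: ennreal_le_iff)
qed

lemma integral_deviation_tendsto_0:
  assumes M: "real_distribution M" and h: "\<And>k. bounded_lipschitz B (c k) (h k)"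
    and c: "c \<longlonglongrightarrow> 0"
  shows "(\<lambda>k. (\<integral>x. h k x \<partial>M) - h k 0) \<longlonglongrightarrow> 0"
proof -
  interpret real_distribution M by fact
  have hm: "h k \<in> borel_measurable M" for k
    by (rule measurable_borel_sets_cong[OF events_eq_borel bounded_lipschitz_measurable[OF h]])
  have "(\<lambda>k. (\<integral>x. h k x - h k 0 \<partial>M)) \<longlonglongrightarrow> (\<integral>x. 0 \<partial>M)"
  proof (rule integral_dominated_convergence[where w="\<lambda>x. 2 * B"])
    show "(\<lambda>x. h k x - h k 0) \<in> borel_measurable M" for k
      by (intro borel_measurable_diff hm measurable_const) (simp only: space_borel UNIV_I)
    show "AE x in M. (\<lambda>k. h k x - h k 0) \<longlonglongrightarrow> 0"
    proof (rule AE_I2)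
      fix x
      have le: "\<bar>h k x - h k 0\<bar> \<le> c k * \<bar>x\<bar>" for k
        using bounded_lipschitzD(3)[OF h, of k x 0] by simp
      have lim: "(\<lambda>k. c k * \<bar>x\<bar>) \<longlonglongrightarrow> 0" by (rule tendsto_mult_left_zero[OF c])
      show "(\<lambda>k. h k x - h k 0) \<longlonglongrightarrow> 0"
        by (rule Lim_null_comparison[OF _ lim]) (use le in \<open>auto intro: always_eventually\<close>)
    qed
    show "AE x in M. norm (h k x - h k 0) \<le> 2 * B" for k
    proof (rule AE_I2)
      fix x
      have "\<bar>h k x\<bar> \<le> B" "\<bar>h k 0\<bar> \<le> B" by (rule bounded_lipschitzD(2)[OF h])+
      thus "norm (h k x - h k 0) \<le> 2 * B" by simp
    qed
    show "integrable M (\<lambda>x. 2 * B)" by simp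
  qed simp
  thus ?thesis by (simp add: integral_sub_value_at_0[OF M h])
qed

lemma cts_step_eq_clamp:
  assumes ab: "a < b" shows "cts_step a b x = max 0 (min 1 ((b - x) / (b - a)))"
proof -
  have d: "b - a > 0" using ab by simp
  consider "x \<le> a" | "b \<le> x" | "a < x" "x < b" by linarith
  thus ?thesis
  proof cases
    case 1
    hence "1 \<le> (b - x) / (b - a)" using d by (subst le_divide_eq_1_pos) auto
    thus ?thesis using 1 by (simp add: cts_step_def)
  next
    case 2
    hence "(b - x) / (b - a) \<le> 0" using d by (intro divide_nonpos_pos) auto
    thus ?thesis using 2 ab by (simp add: cts_step_def)
  next
    case 3
    hence "(b - x) / (b - a) \<le> 1" "0 \<le> (b - x) / (b - a)"
      using d by (auto simp: divide_le_eq_1_pos)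
    thus ?thesis using 3 by (simp add: cts_step_def)
  qed
qed

lemma bounded_lipschitz_cts_step:
  assumes ab: "a < b" shows "bounded_lipschitz 1 (1 / (b - a)) (cts_step a b)"
proof -
  have clamp: "\<bar>max 0 (min 1 u) - max 0 (min 1 v)\<bar> \<le> \<bar>u - v\<bar>" for u v :: real
    by (simp add: max_def min_def abs_if)
  have "\<bar>cts_step a b x - cts_step a b y\<bar> \<le> 1 / (b - a) * \<bar>x - y\<bar>" for x y
  proof -
    have "\<bar>cts_step a b x - cts_step a b y\<bar> \<le> \<bar>(b - x) / (b - a) - (b - y) / (b - a)\<bar>"
      unfolding cts_step_eq_clamp[OF ab] by (rule clamp)
    also have "\<dots> = 1 / (b - a) * \<bar>x - y\<bar>"
      using ab by (simp add: diff_divide_distrib[symmetric] abs_minus_commute)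
    finally show ?thesis .
  qed
  thus ?thesis using ab by (simp add: bounded_lipschitz_def cts_step_eq_clamp)
qed

(* Bounded Lipschitz functions separate laws on the real line: they squeeze the cdf. *)
lemma real_distribution_eqI_bounded_lipschitz:
  assumes M: "real_distribution M" and N: "real_distribution N"
    and eq: "\<And>L h. bounded_lipschitz 1 L h \<Longrightarrow> (\<integral>z. h z \<partial>M) = (\<integral>z. h z \<partial>N)"
  shows "M = N"
proof -
  have le: "cdf A x \<le> cdf B x" if A: "real_distribution A" and B: "real_distribution B"
    and e: "\<And>L h. bounded_lipschitz 1 L h \<Longrightarrow> (\<integral>z. h z \<partial>A) = (\<integral>z. h z \<partial>B)" for A B x
  proof -
    have "\<forall>\<^sub>F y in at_right x. cdf A x \<le> cdf B y"
    proof (rule eventually_at_rightI[where b="x + 1"])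
      fix y assume "y \<in> {x<..<x + 1}"
      hence xy: "x < y" by simp
      have "cdf A x \<le> (\<integral>z. cts_step x y z \<partial>A)" by (rule real_distribution.cdf_cts_step(1)[OF A xy])
      also have "\<dots> = (\<integral>z. cts_step x y z \<partial>B)" by (rule e[OF bounded_lipschitz_cts_step[OF xy]])
      also have "\<dots> \<le> cdf B y" by (rule real_distribution.cdf_cts_step(2)[OF B xy])
      finally show "cdf A x \<le> cdf B y" .
    qed simp
    moreover have "(cdf B \<longlongrightarrow> cdf B x) (at_right x)"
      using finite_borel_measure.cdf_is_right_cont[OF real_distribution.finite_borel_measure_M[OF B]]
      by (simp add: continuous_within)
    ultimately show ?thesis by (intro tendsto_le[OF _ _ tendsto_const]) auto
  qed
  have "cdf M = cdf N"
    using le[OF M N eq] le[OF N M eq[symmetric]] by (intro ext antisym)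
  thus ?thesis by (rule cdf_unique[OF M N])
qed

lemma measure_abs_ge_le_moment:
  assumes M: "real_distribution M" and mom: "(\<integral>\<^sup>+x. ennreal \<bar>x\<bar> \<partial>M) \<le> ennreal C"
    and b: "b > 0" and C: "C \<ge> 0"
  shows "measure M {x. b \<le> \<bar>x\<bar>} \<le> C / b"
proof -
  interpret real_distribution M by fact
  define S where "S = {x::real. b \<le> \<bar>x\<bar>}"
  have S: "S \<in> sets M" unfolding S_def by measurable
  have "ennreal (b * measure M S) = (\<integral>\<^sup>+x. ennreal b * indicator S x \<partial>M)"
    using b by (simp add: nn_integral_cmult_indicator[OF S] emeasure_eq_measure ennreal_mult)
  also have "\<dots> \<le> (\<integral>\<^sup>+x. ennreal \<bar>x\<bar> \<partial>M)"
    by (intro nn_integral_mono) (auto simp: S_def ennreal_leI split: split_indicator)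
  finally have "ennreal (b * measure M S) \<le> ennreal C" using mom by (rule order_trans)
  hence "b * measure M S \<le> C" using C by (simp add: ennreal_le_iff)
  thus ?thesis unfolding S_def[symmetric] using b by (simp add: pos_le_divide_eq mult.commute)
qed

lemma tight_if_moment_bounded:
  assumes M: "\<And>n. real_distribution (\<mu> n)"
    and mom: "\<And>n. (\<integral>\<^sup>+x. ennreal \<bar>x\<bar> \<partial>\<mu> n) \<le> ennreal C" and C: "C \<ge> 0"
  shows "tight \<mu>"
  unfolding tight_def
proof (intro conjI allI impI)
  show "real_distribution (\<mu> n)" for n by (rule M)
  fix e :: real assume e: "0 < e"
  define b where "b = 2 * C / e + 1"
  have b: "b > 0" using C e by (simp add: b_def add_nonneg_pos)
  have "e * b = 2 * C + e" using e by (simp add: b_def field_simps)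
  hence Cb: "C / b < e" using b C e by (simp add: divide_less_eq)
  have "measure (\<mu> n) {- b<..b} > 1 - e" for n
  proof -
    interpret real_distribution "\<mu> n" by (rule M)
    define S where "S = {x::real. b \<le> \<bar>x\<bar>}"
    have S: "S \<in> sets (\<mu> n)" unfolding S_def by measurable
    have "1 - measure (\<mu> n) S = measure (\<mu> n) (UNIV - S)"
      using prob_compl[OF S] by (simp add: space_eq_univ)
    also have "\<dots> \<le> measure (\<mu> n) {- b<..b}"
      by (intro finite_measure_mono) (auto simp: S_def)
    finally show ?thesis
      using measure_abs_ge_le_moment[OF M[of n] mom[of n] b C] Cb unfolding S_def by linarith
  qed
  moreover have "- b < b" using b by simp
  ultimately show "\<exists>a b. a < b \<and> (\<forall>n. 1 - e < measure (\<mu> n) {a<..b})" by blast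
qed

definition truncated_abs :: "nat \<Rightarrow> real \<Rightarrow> real" where
  "truncated_abs m x = min \<bar>x\<bar> (real m)"

lemma bounded_lipschitz_truncated_abs: "bounded_lipschitz (real m) 1 (truncated_abs m)"
  by (auto simp: bounded_lipschitz_def truncated_abs_def min_def abs_if)

lemma nn_integral_truncated_abs:
  assumes "real_distribution N"
  shows "(\<integral>\<^sup>+x. ennreal (truncated_abs m x) \<partial>N) = ennreal (\<integral>x. truncated_abs m x \<partial>N)"
  by (rule nn_integral_eq_integral
      [OF bounded_lipschitz_integrable[OF assms bounded_lipschitz_truncated_abs]])
     (simp add: truncated_abs_def)

lemma nn_integral_abs_SUP_truncated:
  assumes M: "real_distribution M"
  shows "(\<integral>\<^sup>+x. ennreal \<bar>x\<bar> \<partial>M) = (SUP m. (\<integral>\<^sup>+x. ennreal (truncated_abs m x) \<partial>M))"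
proof -
  interpret real_distribution M by (rule M)
  have sup: "(SUP m. ennreal (truncated_abs m x)) = ennreal \<bar>x\<bar>" for x
  proof (rule antisym)
    show "(SUP m. ennreal (truncated_abs m x)) \<le> ennreal \<bar>x\<bar>"
      by (rule SUP_least) (simp add: truncated_abs_def ennreal_leI)
    have "truncated_abs (nat \<lceil>\<bar>x\<bar>\<rceil>) x = \<bar>x\<bar>" unfolding truncated_abs_def by (simp add: min_def)
    thus "ennreal \<bar>x\<bar> \<le> (SUP m. ennreal (truncated_abs m x))"
      by (intro SUP_upper2[of "nat \<lceil>\<bar>x\<bar>\<rceil>"]) auto
  qed
  show ?thesis unfolding sup[symmetric]
  proof (rule nn_integral_monotone_convergence_SUP)
    show "incseq (\<lambda>m x. ennreal (truncated_abs m x))"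
      by (auto simp: incseq_def le_fun_def truncated_abs_def intro!: ennreal_leI)
    show "(\<lambda>x. ennreal (truncated_abs m x)) \<in> borel_measurable M" for m
      using measurable_borel_sets_cong[OF events_eq_borel
          bounded_lipschitz_measurable[OF bounded_lipschitz_truncated_abs]]
      by simp
  qed
qed

(* First moment bounds pass to weak limits, since each truncated mean converges. *)
lemma weak_conv_moment_le:
  assumes \<mu>: "\<And>n. real_distribution (\<mu> n)" and M: "real_distribution M"
    and wc: "weak_conv_m \<mu> M"
    and mom: "\<And>n. (\<integral>\<^sup>+x. ennreal \<bar>x\<bar> \<partial>\<mu> n) \<le> ennreal C" and C: "C \<ge> 0"
  shows "(\<integral>\<^sup>+x. ennreal \<bar>x\<bar> \<partial>M) \<le> ennreal C"
proof -
  note tr = bounded_lipschitz_truncated_abs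
  have tr_le: "(\<integral>x. truncated_abs m x \<partial>\<mu> n) \<le> C" for m n
  proof -
    have "ennreal (\<integral>x. truncated_abs m x \<partial>\<mu> n) \<le> (\<integral>\<^sup>+x. ennreal \<bar>x\<bar> \<partial>\<mu> n)"
      unfolding nn_integral_truncated_abs[OF \<mu>, symmetric]
      by (intro nn_integral_mono ennreal_leI) (simp add: truncated_abs_def)
    from order_trans[OF this mom[of n]] show ?thesis using C by (simp add: ennreal_le_iff)
  qed
  have lim_tr: "(\<integral>x. truncated_abs m x \<partial>M) \<le> C" for m
  proof (rule LIMSEQ_le_const2)
    show "(\<lambda>n. \<integral>x. truncated_abs m x \<partial>\<mu> n) \<longlonglongrightarrow> (\<integral>x. truncated_abs m x \<partial>M)"
      by (rule weak_conv_imp_integral_bdd_continuous_conv[OF \<mu> M wc, where B="real m"])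
         (use bounded_lipschitz_isCont[OF tr] bounded_lipschitzD(2)[OF tr] in auto)
  qed (use tr_le in auto)
  show ?thesis unfolding nn_integral_abs_SUP_truncated[OF M]
    by (rule SUP_least) (use lim_tr in \<open>simp add: nn_integral_truncated_abs[OF M] ennreal_leI\<close>)
qed

section \<open>The Poisson law\<close>

lemma pmf_pois:
  assumes "r \<ge> 0" shows "pmf (pois r) n = r ^ n / fact n * exp (- r)"
proof (cases "r = 0")
  case True
  thus ?thesis by (simp add: pois_def indicator_def power_0_left)
next
  case False
  with assms have "r > 0" by simp
  thus ?thesis by (simp add: pois_def)
qed

lemma pois_max: "pois (max 0 r) = pois r"
  by (simp add: pois_def)

lemma pmf_pois_eq_1:
  assumes l: "l \<ge> 0" and py: "pmf (pois l) y = 1"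
  shows "l = 0 \<and> y = 0"
proof (cases "l > 0")
  case True
  have pos: "pmf (pois l) (Suc y) > 0" using True by (simp add: pmf_pois)
  have "pmf (pois l) y + pmf (pois l) (Suc y) = measure (measure_pmf (pois l)) {y, Suc y}"
    by (subst measure_measure_pmf_finite) auto
  also have "\<dots> \<le> 1" by (rule measure_pmf.prob_le_1)
  finally show ?thesis using py pos by simp
next
  case False
  with l py show ?thesis by (auto simp: pois_def split: split_indicator_asm)
qed

(* Poisson laws are closed under convolution; this provides the coupling of Poisson(a) and
   Poisson(a + d) used for the contraction estimate. *)
lemma pois_add:
  assumes a: "a \<ge> 0" and b: "b \<ge> 0"
  shows "pois (a + b) = map_pmf (\<lambda>(x, y). x + y) (pair_pmf (pois a) (pois b))"
proof (rule pmf_eqI)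
  fix k :: nat
  have pre: "(\<lambda>(x, y). x + y) -` {k} = (\<lambda>j. (j, k - j)) ` {..k}"
    by (auto simp: image_iff)
  have inj: "inj_on (\<lambda>j. (j, k - j)) {..k}" by (auto simp: inj_on_def)
  have "pmf (map_pmf (\<lambda>(x, y). x + y) (pair_pmf (pois a) (pois b))) k
      = (\<Sum>j\<le>k. pmf (pois a) j * pmf (pois b) (k - j))"
    unfolding pmf_map pre
    by (subst measure_measure_pmf_finite) (auto simp: sum.reindex[OF inj] pmf_pair)
  also have "\<dots> = (\<Sum>j\<le>k. (fact k / (fact j * fact (k - j))) * a ^ j * b ^ (k - j))
                    / fact k * exp (- (a + b))"
    unfolding pmf_pois[OF a] pmf_pois[OF b] sum_divide_distrib sum_distrib_right
    by (intro sum.cong refl) (simp add: exp_add[symmetric] field_simps exp_minus)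
  also have "\<dots> = (a + b) ^ k / fact k * exp (- (a + b))"
    by (simp add: binomial_ring binomial_fact)
  also have "\<dots> = pmf (pois (a + b)) k" using a b by (simp add: pmf_pois)
  finally show "pmf (pois (a + b)) k =
      pmf (map_pmf (\<lambda>(x, y). x + y) (pair_pmf (pois a) (pois b))) k" by simp
qed

(* The mean of Poisson(r) is r: the series of n r^n e^-r / n! sums to r e^r e^-r. *)
lemma pois_mean:
  assumes r: "r \<ge> 0"
  shows "(\<integral>\<^sup>+ n. ennreal (real n) \<partial>measure_pmf (pois r)) = ennreal r"
proof -
  define g where "g n = r ^ n / fact n * exp (- r) * real n" for n
  have "(\<lambda>m. r * (r ^ m /\<^sub>R fact m)) sums (r * exp r)"
    by (rule sums_mult[OF exp_converges])
  hence "(\<lambda>m. exp (-r) * (r * (r ^ m /\<^sub>R fact m))) sums (exp (-r) * (r * exp r))"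
    by (rule sums_mult)
  moreover have "exp (-r) * (r * exp r) = r" by (simp add: exp_minus field_simps)
  moreover have "g (Suc m) = exp (-r) * (r * (r ^ m /\<^sub>R fact m))" for m
  proof -
    have "g (Suc m) = ((real m + 1) * (r * r ^ m)) / ((real m + 1) * fact m) * exp (- r)"
      unfolding g_def fact_Suc power_Suc by (simp add: algebra_simps)
    also have "\<dots> = (r * r ^ m) / fact m * exp (-r)"
      by (subst mult_divide_mult_cancel_left) auto
    also have "\<dots> = exp (-r) * (r * (r ^ m /\<^sub>R fact m))" by (simp add: divide_inverse_commute)
    finally show ?thesis .
  qed
  ultimately have "(\<lambda>m. g (Suc m)) sums r" by simp
  hence gs: "g sums r" by (subst (asm) sums_Suc_iff) (simp add: g_def)
  have g0: "g n \<ge> 0" for n using r by (simp add: g_def)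
  have "(\<integral>\<^sup>+ n. ennreal (real n) \<partial>measure_pmf (pois r)) = (\<integral>\<^sup>+ n. ennreal (g n) \<partial>count_space UNIV)"
    unfolding nn_integral_measure_pmf
    by (intro nn_integral_cong) (simp add: g_def pmf_pois r ennreal_mult'[symmetric])
  also have "\<dots> = (\<Sum>n. ennreal (g n))" by (simp add: nn_integral_count_space_nat)
  also have "\<dots> = ennreal r"
  proof -
    have "(\<lambda>n. ennreal (g n)) sums ennreal r" using gs g0 r by (subst sums_ennreal) auto
    thus ?thesis by (simp add: sums_iff)
  qed
  finally show ?thesis .
qed

lemma nn_integral_pmf_affine_le:
  fixes g \<phi> :: "'a \<Rightarrow> real"
  assumes le: "\<And>x. g x \<le> a + b * \<phi> x" and a: "a \<ge> 0" and b: "b \<ge> 0" and \<phi>: "\<And>x. \<phi> x \<ge> 0"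
    and mean: "(\<integral>\<^sup>+x. ennreal (\<phi> x) \<partial>measure_pmf p) = ennreal m" and m: "m \<ge> 0"
  shows "(\<integral>\<^sup>+x. ennreal (g x) \<partial>measure_pmf p) \<le> ennreal (a + b * m)"
proof -
  have split: "ennreal (a + b * t) = ennreal a + ennreal b * ennreal t" if "t \<ge> 0" for t
    by (simp only: ennreal_plus[OF a mult_nonneg_nonneg[OF b that]] ennreal_mult'[OF b])
  have "(\<integral>\<^sup>+x. ennreal (g x) \<partial>measure_pmf p)
      \<le> (\<integral>\<^sup>+x. ennreal a + ennreal b * ennreal (\<phi> x) \<partial>measure_pmf p)"
    by (intro nn_integral_mono) (simp only: split[OF \<phi>, symmetric] ennreal_leI[OF le])
  also have "\<dots> = ennreal a + ennreal b * ennreal m"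
    by (subst nn_integral_add)
       (simp_all add: nn_integral_cmult measure_pmf.emeasure_space_1 mean)
  also have "\<dots> = ennreal (a + b * m)" by (simp only: split[OF m])
  finally show ?thesis .
qed

lemma measurable_pois_kernel:
  fixes g :: "real \<Rightarrow> nat \<Rightarrow> 'b"
  assumes g: "\<And>n. (\<lambda>s. g s n) \<in> borel \<rightarrow>\<^sub>M N"
  shows "(\<lambda>s. distr (measure_pmf (pois s)) N (g s)) \<in> borel \<rightarrow>\<^sub>M subprob_algebra N"
proof (rule measurable_subprob_algebra)
  fix s :: real
  have gs: "g s \<in> measure_pmf (pois s) \<rightarrow>\<^sub>M N" using measurable_space[OF g] by auto
  show "subprob_space (distr (measure_pmf (pois s)) N (g s))"
    by (rule prob_space_imp_subprob_space, rule measure_pmf.prob_space_distr[OF gs])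
  show "sets (distr (measure_pmf (pois s)) N (g s)) = sets N" by simp
next
  fix A assume A: "A \<in> sets N"
  have eq: "emeasure (distr (measure_pmf (pois s)) N (g s)) A =
      (\<Sum>n. ennreal ((max 0 s) ^ n / fact n * exp (- max 0 s)) * indicator A (g s n))" for s
  proof -
    have gs: "g s \<in> measure_pmf (pois s) \<rightarrow>\<^sub>M N" using measurable_space[OF g] by auto
    have "emeasure (distr (measure_pmf (pois s)) N (g s)) A
        = (\<integral>\<^sup>+n. indicator (g s -` A) n \<partial>measure_pmf (pois s))"
      using A gs by (simp add: emeasure_distr)
    also have "\<dots> = (\<integral>\<^sup>+n. ennreal (pmf (pois (max 0 s)) n) * indicator A (g s n) \<partial>count_space UNIV)"
      by (simp add: nn_integral_measure_pmf pois_max indicator_vimage[symmetric])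
    also have "\<dots> = (\<Sum>n. ennreal ((max 0 s) ^ n / fact n * exp (- max 0 s)) * indicator A (g s n))"
      by (simp add: nn_integral_count_space_nat pmf_pois)
    finally show ?thesis .
  qed
  have [measurable]: "(\<lambda>s. g s n) \<in> borel \<rightarrow>\<^sub>M N" for n by (rule g)
  show "(\<lambda>s. emeasure (distr (measure_pmf (pois s)) N (g s)) A) \<in> borel_measurable borel"
    unfolding eq using A by measurable
qed

section \<open>The intensity chain and its contraction property\<close>

locale poisson_ar =
  fixes f :: "real \<Rightarrow> nat \<Rightarrow> real" and \<kappa>1 \<kappa>2 :: real
  assumes f_nonneg: "\<And>l y. l \<ge> 0 \<Longrightarrow> f l y \<ge> 0"
    and k1: "\<kappa>1 \<ge> 0" and k2: "\<kappa>2 \<ge> 0" and k: "\<kappa>1 + \<kappa>2 < 1"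
    and contr: "\<And>l l' y y'. l \<ge> 0 \<Longrightarrow> l' \<ge> 0 \<Longrightarrow>
                  \<bar>f l y - f l' y'\<bar> \<le> \<kappa>1 * \<bar>l - l'\<bar> + \<kappa>2 * \<bar>real y - real y'\<bar>"
begin

definition next_intensity :: "nat \<times> real \<Rightarrow> real" where
  "next_intensity x = f (max 0 (snd x)) (fst x)"

definition intensity_kernel :: "real \<Rightarrow> real measure" where
  "intensity_kernel s = distr (measure_pmf (pois s)) borel (\<lambda>n. f (max 0 s) n)"

definition state_kernel :: "real \<Rightarrow> (nat \<times> real) measure" where
  "state_kernel s = distr (measure_pmf (pois s)) borel (\<lambda>n. (n, s))"

definition Phi :: "(real \<Rightarrow> real) \<Rightarrow> real \<Rightarrow> real" where
  "Phi h s = (\<integral>n. h (f (max 0 s) n) \<partial>measure_pmf (pois s))"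

lemma Phi_max: "Phi h (max 0 s) = Phi h s"
  by (simp add: Phi_def pois_max)

lemma Phi_bound:
  assumes hb: "\<And>x. \<bar>h x\<bar> \<le> B"
  shows "\<bar>Phi h s\<bar> \<le> B"
proof -
  have "\<bar>Phi h s\<bar> \<le> (\<integral>n. \<bar>h (f (max 0 s) n)\<bar> \<partial>measure_pmf (pois s))"
    unfolding Phi_def by (rule integral_abs_bound)
  also have "\<dots> \<le> B"
    using hb by (intro measure_pmf.integral_le_const measure_pmf.integrable_const_bound[where B=B]) auto
  finally show ?thesis .
qed

(* Coupling: with X ~ Poisson(a), Y ~ Poisson(c - a) independent, X + Y ~ Poisson(c). *)
lemma Phi_coupling:
  assumes h: "bounded_lipschitz B L h" and a: "0 \<le> a" and ac: "a \<le> c"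
  shows "Phi h c - Phi h a =
    (\<integral>p. h (f c (fst p + snd p)) - h (f a (fst p)) \<partial>measure_pmf (pair_pmf (pois a) (pois (c - a))))"
proof -
  define Q where "Q = pair_pmf (pois a) (pois (c - a))"
  have hb: "\<bar>h x\<bar> \<le> B" for x by (rule bounded_lipschitzD(2)[OF h])
  have "Phi h c = (\<integral>p. h (f c (fst p + snd p)) \<partial>measure_pmf Q)"
    using pois_add[OF a, of "c - a"] a ac unfolding Phi_def Q_def by (simp add: case_prod_beta)
  moreover have "Phi h a = (\<integral>n. h (f a n) \<partial>measure_pmf (map_pmf fst Q))"
    unfolding Phi_def Q_def map_fst_pair_pmf using a by simp
  ultimately show ?thesis unfolding Q_def[symmetric]
    using hb by (subst Bochner_Integration.integral_diff)
      (auto intro!: measure_pmf.integrable_const_bound[where B=B])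
qed

(* The key estimate: Phi multiplies Lipschitz constants by \<kappa> = \<kappa>1 + \<kappa>2, since the coupled
   intensities differ by at most \<kappa>1 (c - a) + \<kappa>2 Y with E Y = c - a. *)
lemma Phi_lipschitz_ordered:
  assumes h: "bounded_lipschitz B L h" and a: "0 \<le> a" and ac: "a \<le> c"
  shows "\<bar>Phi h c - Phi h a\<bar> \<le> (\<kappa>1 + \<kappa>2) * L * (c - a)"
proof -
  define d where "d = c - a"
  define Q where "Q = pair_pmf (pois a) (pois d)"
  define D where "D p = h (f c (fst p + snd p)) - h (f a (fst p))" for p
  have d: "d \<ge> 0" and c: "c \<ge> 0" using a ac by (auto simp: d_def)
  have L: "L \<ge> 0" and hb: "\<bar>h x\<bar> \<le> B" for x using bounded_lipschitzD[OF h] by auto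
  have int: "integrable (measure_pmf Q) D"
  proof (rule measure_pmf.integrable_const_bound[where B="2*B"])
    show "AE p in measure_pmf Q. norm (D p) \<le> 2 * B"
    proof (rule AE_I2)
      fix p
      have "\<bar>h (f c (fst p + snd p))\<bar> \<le> B" "\<bar>h (f a (fst p))\<bar> \<le> B" by (rule hb)+
      thus "norm (D p) \<le> 2 * B" by (simp add: D_def)
    qed
  qed simp
  have pointwise: "\<bar>D p\<bar> \<le> L * \<kappa>1 * d + L * \<kappa>2 * real (snd p)" for p
  proof -
    have "\<bar>D p\<bar> \<le> L * \<bar>f c (fst p + snd p) - f a (fst p)\<bar>"
      unfolding D_def by (rule bounded_lipschitzD(3)[OF h])
    also have "\<dots> \<le> L * (\<kappa>1 * \<bar>c - a\<bar> + \<kappa>2 * \<bar>real (fst p + snd p) - real (fst p)\<bar>)"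
      using contr[OF c a, of "fst p + snd p" "fst p"] L by (intro mult_left_mono) auto
    also have "\<dots> = L * \<kappa>1 * d + L * \<kappa>2 * real (snd p)"
      using ac by (simp add: d_def algebra_simps)
    finally show ?thesis .
  qed
  have mean: "(\<integral>\<^sup>+p. ennreal (real (snd p)) \<partial>measure_pmf Q) = ennreal d"
  proof -
    have "(\<integral>\<^sup>+p. ennreal (real (snd p)) \<partial>measure_pmf Q)
        = (\<integral>\<^sup>+n. ennreal (real n) \<partial>measure_pmf (map_pmf snd Q))" by simp
    thus ?thesis unfolding Q_def map_snd_pair_pmf pois_mean[OF d] .
  qed
  have "Phi h c - Phi h a = (\<integral>p. D p \<partial>measure_pmf Q)"
    using Phi_coupling[OF h a ac] by (simp add: Q_def D_def[abs_def] d_def)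
  hence "ennreal \<bar>Phi h c - Phi h a\<bar> \<le> (\<integral>\<^sup>+p. ennreal \<bar>D p\<bar> \<partial>measure_pmf Q)"
    using integral_norm_bound_ennreal[OF int] by simp
  also have "\<dots> \<le> ennreal (L * \<kappa>1 * d + L * \<kappa>2 * d)"
    by (rule nn_integral_pmf_affine_le[OF pointwise _ _ _ mean d]) (use L k1 k2 d in auto)
  also have "L * \<kappa>1 * d + L * \<kappa>2 * d = (\<kappa>1 + \<kappa>2) * L * (c - a)"
    by (simp add: d_def algebra_simps)
  finally show ?thesis using L k1 k2 ac by (simp add: ennreal_le_iff)
qed

lemma bounded_lipschitz_Phi:
  assumes h: "bounded_lipschitz B L h"
  shows "bounded_lipschitz B ((\<kappa>1 + \<kappa>2) * L) (Phi h)"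
proof -
  have L: "L \<ge> 0" using bounded_lipschitzD(1)[OF h] .
  have "\<bar>Phi h s - Phi h t\<bar> \<le> (\<kappa>1 + \<kappa>2) * L * \<bar>s - t\<bar>" for s t
  proof -
    have le: "\<bar>Phi h u - Phi h v\<bar> \<le> (\<kappa>1 + \<kappa>2) * L * \<bar>u - v\<bar>" if "0 \<le> v" "v \<le> u" for u v
      using Phi_lipschitz_ordered[OF h that] that by simp
    have "\<bar>Phi h (max 0 s) - Phi h (max 0 t)\<bar> \<le> (\<kappa>1 + \<kappa>2) * L * \<bar>max 0 s - max 0 t\<bar>"
    proof (cases "max 0 t \<le> max 0 s")
      case True
      show ?thesis by (rule le[OF max.cobounded1 True])
    next
      case False
      hence "max 0 s \<le> max 0 t" by linarith
      from le[OF max.cobounded1 this] show ?thesis by (metis abs_minus_commute)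
    qed
    also have "\<dots> \<le> (\<kappa>1 + \<kappa>2) * L * \<bar>s - t\<bar>"
      using L k1 k2 by (intro mult_left_mono) (auto simp: max_def abs_if)
    finally show ?thesis by (simp add: Phi_max)
  qed
  thus ?thesis using L k1 k2 bounded_lipschitzD(2)[OF h]
    by (auto simp: bounded_lipschitz_def intro: Phi_bound)
qed

lemma bounded_lipschitz_Phi_iter:
  "bounded_lipschitz B L h \<Longrightarrow> bounded_lipschitz B ((\<kappa>1 + \<kappa>2) ^ k * L) ((Phi ^^ k) h)"
  by (induction k) (auto dest: bounded_lipschitz_Phi simp: mult.assoc)

lemma kappa_power_tendsto_0: "(\<lambda>k. (\<kappa>1 + \<kappa>2) ^ k) \<longlonglongrightarrow> 0"
  by (rule LIMSEQ_power_zero) (use k1 k2 k in simp)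

lemma f_clamped_lipschitz: "\<bar>f (max 0 s) n - f (max 0 t) n\<bar> \<le> \<kappa>1 * \<bar>s - t\<bar>"
proof -
  have "\<bar>f (max 0 s) n - f (max 0 t) n\<bar> \<le> \<kappa>1 * \<bar>max 0 s - max 0 t\<bar>"
    using contr[of "max 0 s" "max 0 t" n n] by simp
  also have "\<dots> \<le> \<kappa>1 * \<bar>s - t\<bar>" using k1 by (intro mult_left_mono) (auto simp: max_def abs_if)
  finally show ?thesis .
qed

lemma f_clamped_measurable[measurable]: "(\<lambda>s. f (max 0 s) n) \<in> borel_measurable borel"
proof -
  have "\<kappa>1-lipschitz_on UNIV (\<lambda>s. f (max 0 s) n)"
    using f_clamped_lipschitz k1 by (auto simp: lipschitz_on_def dist_real_def)
  thus ?thesis by (intro borel_measurable_continuous_onI lipschitz_on_continuous_on)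
qed

lemma measurable_intensity_kernel[measurable]:
  "intensity_kernel \<in> borel \<rightarrow>\<^sub>M subprob_algebra borel"
  unfolding intensity_kernel_def[abs_def] by (rule measurable_pois_kernel) simp

lemma measurable_state_kernel[measurable]: "state_kernel \<in> borel \<rightarrow>\<^sub>M subprob_algebra borel"
  unfolding state_kernel_def[abs_def]
  by (rule measurable_pois_kernel, rule borel_measurable_continuous_onI) (intro continuous_intros)

lemma snd_borel_measurable: "(snd :: nat \<times> real \<Rightarrow> real) \<in> borel_measurable borel"
  by (intro borel_measurable_continuous_onI continuous_intros)

lemma measurable_next_intensity[measurable]: "next_intensity \<in> borel_measurable borel"
proof -
  have "(fst :: nat \<times> real \<Rightarrow> nat) \<in> borel \<rightarrow>\<^sub>M borel"
    by (intro borel_measurable_continuous_onI continuous_intros)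
  hence fst: "(fst :: nat \<times> real \<Rightarrow> nat) \<in> borel \<rightarrow>\<^sub>M count_space UNIV"
    using measurable_cong_sets[OF refl sets_borel_eq_count_space] by blast
  have "(\<lambda>x. f (max 0 (snd x)) i) \<in> borel_measurable (borel :: (nat \<times> real) measure)" for i
    using measurable_compose[OF snd_borel_measurable f_clamped_measurable] by simp
  thus ?thesis unfolding next_intensity_def[abs_def]
    by (rule measurable_compose_countable'[OF _ fst]) simp
qed

lemma prob_space_intensity_kernel: "prob_space (intensity_kernel s)"
  unfolding intensity_kernel_def by (rule measure_pmf.prob_space_distr) simp

lemma sets_intensity_kernel[simp]: "sets (intensity_kernel s) = sets borel"
  by (simp add: intensity_kernel_def)

lemma prob_space_state_kernel: "prob_space (state_kernel s)"
  unfolding state_kernel_def by (rule measure_pmf.prob_space_distr) simp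

lemma sets_state_kernel[simp]: "sets (state_kernel s) = sets borel"
  by (simp add: state_kernel_def)

lemma integral_intensity_kernel:
  "h \<in> borel_measurable borel \<Longrightarrow> (\<integral>x. h x \<partial>intensity_kernel s) = Phi h s"
  unfolding intensity_kernel_def Phi_def by (subst integral_distr) auto

lemma real_distribution_bind_intensity:
  assumes "real_distribution \<nu>"
  shows "real_distribution (\<nu> \<bind> intensity_kernel)"
proof -
  interpret real_distribution \<nu> by fact
  have m: "intensity_kernel \<in> \<nu> \<rightarrow>\<^sub>M subprob_algebra borel"
    by (rule measurable_borel_sets_cong[OF events_eq_borel measurable_intensity_kernel])
  show ?thesis
  proof (rule real_distributionI)
    show "prob_space (\<nu> \<bind> intensity_kernel)"
      by (rule prob_space_bind[OF _ m]) (simp add: prob_space_intensity_kernel)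
    show "sets (\<nu> \<bind> intensity_kernel) = sets borel" by (rule sets_bind) (auto simp: not_empty)
  qed
qed

lemma integral_bind_intensity:
  assumes \<nu>: "real_distribution \<nu>" and h: "bounded_lipschitz B L h"
  shows "(\<integral>x. h x \<partial>(\<nu> \<bind> intensity_kernel)) = (\<integral>s. Phi h s \<partial>\<nu>)"
proof -
  interpret real_distribution \<nu> by fact
  have m: "intensity_kernel \<in> \<nu> \<rightarrow>\<^sub>M subprob_algebra borel"
    by (rule measurable_borel_sets_cong[OF events_eq_borel measurable_intensity_kernel])
  have hm: "h \<in> borel_measurable borel" by (rule bounded_lipschitz_measurable[OF h])
  have "(\<integral>x. h x \<partial>(\<nu> \<bind> intensity_kernel)) = (\<integral>s. (\<integral>x. h x \<partial>intensity_kernel s) \<partial>\<nu>)"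
  proof (rule integral_bind[OF hm _ m])
    show "\<And>x. x \<in> space borel \<Longrightarrow> \<bar>h x\<bar> \<le> B" using bounded_lipschitzD(2)[OF h] by simp
    show "finite_measure \<nu>" by (rule finite_measure_axioms)
    show "AE x in \<nu>. emeasure (intensity_kernel x) (space (intensity_kernel x)) \<le> ennreal 1"
      by (intro AE_I2) (simp add: prob_space.emeasure_space_1[OF prob_space_intensity_kernel])
  qed
  also have "\<dots> = (\<integral>s. Phi h s \<partial>\<nu>)" using hm by (simp add: integral_intensity_kernel)
  finally show ?thesis .
qed

(* Moment recursion: E f(\<lambda>, N) \<le> f(0,0) + \<kappa> E \<lambda>, from the contraction at (0, 0). *)
lemma moment_intensity_kernel:
  "(\<integral>\<^sup>+x. ennreal \<bar>x\<bar> \<partial>intensity_kernel s) \<le> ennreal (f 0 0 + (\<kappa>1 + \<kappa>2) * \<bar>s\<bar>)"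
proof -
  let ?m = "max 0 s"
  have bound: "\<bar>f ?m n\<bar> \<le> (f 0 0 + \<kappa>1 * ?m) + \<kappa>2 * real n" for n
    using contr[of ?m 0 n 0] f_nonneg[of ?m n] by simp
  have "(\<integral>\<^sup>+x. ennreal \<bar>x\<bar> \<partial>intensity_kernel s)
      = (\<integral>\<^sup>+n. ennreal \<bar>f ?m n\<bar> \<partial>measure_pmf (pois ?m))"
    unfolding intensity_kernel_def pois_max by (subst nn_integral_distr) auto
  also have "\<dots> \<le> ennreal ((f 0 0 + \<kappa>1 * ?m) + \<kappa>2 * ?m)"
    by (rule nn_integral_pmf_affine_le[OF bound _ k2 _ pois_mean])
       (use f_nonneg[of 0 0] k1 in auto)
  also have "\<dots> \<le> ennreal (f 0 0 + (\<kappa>1 + \<kappa>2) * \<bar>s\<bar>)"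
  proof (intro ennreal_leI)
    have "(\<kappa>1 + \<kappa>2) * ?m \<le> (\<kappa>1 + \<kappa>2) * \<bar>s\<bar>" using k1 k2 by (intro mult_left_mono) auto
    thus "(f 0 0 + \<kappa>1 * ?m) + \<kappa>2 * ?m \<le> f 0 0 + (\<kappa>1 + \<kappa>2) * \<bar>s\<bar>"
      by (simp add: algebra_simps)
  qed
  finally show ?thesis .
qed

lemma moment_bind_intensity:
  assumes "real_distribution \<nu>"
  shows "(\<integral>\<^sup>+x. ennreal \<bar>x\<bar> \<partial>(\<nu> \<bind> intensity_kernel))
    \<le> ennreal (f 0 0) + ennreal (\<kappa>1 + \<kappa>2) * (\<integral>\<^sup>+x. ennreal \<bar>x\<bar> \<partial>\<nu>)"
proof -
  interpret real_distribution \<nu> by fact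
  have m: "intensity_kernel \<in> \<nu> \<rightarrow>\<^sub>M subprob_algebra borel"
    by (rule measurable_borel_sets_cong[OF events_eq_borel measurable_intensity_kernel])
  have kk: "\<kappa>1 + \<kappa>2 \<ge> 0" using k1 k2 by simp
  have split: "ennreal (f 0 0 + (\<kappa>1 + \<kappa>2) * \<bar>s\<bar>) = ennreal (f 0 0) + ennreal (\<kappa>1 + \<kappa>2) * ennreal \<bar>s\<bar>"
    for s
    using f_nonneg[of 0 0] kk
    by (simp only: ennreal_plus[OF _ mult_nonneg_nonneg[OF kk abs_ge_zero]] ennreal_mult'[OF kk] order_refl)
  have "(\<integral>\<^sup>+x. ennreal \<bar>x\<bar> \<partial>(\<nu> \<bind> intensity_kernel))
      = (\<integral>\<^sup>+s. (\<integral>\<^sup>+x. ennreal \<bar>x\<bar> \<partial>intensity_kernel s) \<partial>\<nu>)"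
    by (rule nn_integral_bind[OF _ m]) simp
  also have "\<dots> \<le> (\<integral>\<^sup>+s. ennreal (f 0 0) + ennreal (\<kappa>1 + \<kappa>2) * ennreal \<bar>s\<bar> \<partial>\<nu>)"
    by (intro nn_integral_mono) (simp only: split[symmetric] moment_intensity_kernel)
  also have "\<dots> = ennreal (f 0 0) + ennreal (\<kappa>1 + \<kappa>2) * (\<integral>\<^sup>+x. ennreal \<bar>x\<bar> \<partial>\<nu>)"
    by (subst nn_integral_add)
       (auto simp: nn_integral_cmult emeasure_space_1[simplified space_eq_univ]
         measurable_cong_sets[OF events_eq_borel refl])
  finally show ?thesis .
qed

section \<open>Uniqueness of the invariant law of the intensity\<close>

lemma invariant_integral_Phi_iter:
  assumes \<nu>: "real_distribution \<nu>" and inv: "\<nu> \<bind> intensity_kernel = \<nu>"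
    and h: "bounded_lipschitz B L h"
  shows "(\<integral>x. h x \<partial>\<nu>) = (\<integral>x. (Phi ^^ k) h x \<partial>\<nu>)"
proof (induction k)
  case (Suc k)
  have "(\<integral>x. (Phi ^^ k) h x \<partial>\<nu>) = (\<integral>x. (Phi ^^ k) h x \<partial>(\<nu> \<bind> intensity_kernel))"
    by (simp add: inv)
  also have "\<dots> = (\<integral>x. Phi ((Phi ^^ k) h) x \<partial>\<nu>)"
    by (rule integral_bind_intensity[OF \<nu> bounded_lipschitz_Phi_iter[OF h]])
  finally show ?case using Suc by simp
qed simp

(* Two invariant laws give integrals of Phi^k h that both approach (Phi^k h)(0), since
   Phi^k h has Lipschitz constant \<kappa>^k L \<rightarrow> 0. *)
lemma invariant_unique:
  assumes \<nu>1: "real_distribution \<nu>1" and inv1: "\<nu>1 \<bind> intensity_kernel = \<nu>1"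
    and \<nu>2: "real_distribution \<nu>2" and inv2: "\<nu>2 \<bind> intensity_kernel = \<nu>2"
  shows "\<nu>1 = \<nu>2"
proof (rule real_distribution_eqI_bounded_lipschitz[OF \<nu>1 \<nu>2])
  fix L h assume h: "bounded_lipschitz 1 L h"
  define g where "g k = (Phi ^^ k) h" for k
  have dev: "(\<lambda>k. (\<integral>z. g k z \<partial>\<nu>) - g k 0) \<longlonglongrightarrow> 0" if \<nu>: "real_distribution \<nu>" for \<nu>
  proof (rule integral_deviation_tendsto_0[OF \<nu>])
    show "bounded_lipschitz 1 ((\<kappa>1 + \<kappa>2) ^ k * L) (g k)" for k
      unfolding g_def by (rule bounded_lipschitz_Phi_iter[OF h])
    show "(\<lambda>k. (\<kappa>1 + \<kappa>2) ^ k * L) \<longlonglongrightarrow> 0"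
      by (rule tendsto_mult_left_zero[OF kappa_power_tendsto_0])
  qed
  have "(\<lambda>k. ((\<integral>z. g k z \<partial>\<nu>1) - g k 0) - ((\<integral>z. g k z \<partial>\<nu>2) - g k 0)) \<longlonglongrightarrow> 0 - 0"
    by (intro tendsto_diff dev \<nu>1 \<nu>2)
  moreover have "((\<integral>z. g k z \<partial>\<nu>1) - g k 0) - ((\<integral>z. g k z \<partial>\<nu>2) - g k 0)
      = (\<integral>z. h z \<partial>\<nu>1) - (\<integral>z. h z \<partial>\<nu>2)" for k
    using invariant_integral_Phi_iter[OF \<nu>1 inv1 h, of k] invariant_integral_Phi_iter[OF \<nu>2 inv2 h, of k]
    by (simp add: g_def)
  ultimately show "(\<integral>z. h z \<partial>\<nu>1) = (\<integral>z. h z \<partial>\<nu>2)" by (simp add: LIMSEQ_const_iff)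
qed
section \<open>Existence of an invariant law of the intensity\<close>

definition mu :: "nat \<Rightarrow> real measure" where
  "mu k = ((\<lambda>\<nu>. \<nu> \<bind> intensity_kernel) ^^ k) (return borel 0)"

lemma mu_0: "mu 0 = return borel 0"
  by (simp add: mu_def)

lemma mu_Suc: "mu (Suc k) = mu k \<bind> intensity_kernel"
  by (simp add: mu_def)

lemma real_distribution_mu: "real_distribution (mu k)"
proof (induction k)
  case 0
  show ?case unfolding mu_0 by (rule real_distributionI) (auto intro: prob_space_return)
next
  case (Suc k)
  thus ?case unfolding mu_Suc by (rule real_distribution_bind_intensity)
qed

(* The fixed point of the moment recursion m \<mapsto> f(0,0) + \<kappa> m. *)
definition moment_bound :: real where
  "moment_bound = f 0 0 / (1 - (\<kappa>1 + \<kappa>2))"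

lemma moment_bound_nonneg: "moment_bound \<ge> 0"
  using f_nonneg[of 0 0] k by (simp add: moment_bound_def)

lemma moment_mu: "(\<integral>\<^sup>+x. ennreal \<bar>x\<bar> \<partial>mu k) \<le> ennreal moment_bound"
proof (induction k)
  case 0
  show ?case unfolding mu_0 by (subst nn_integral_return) (auto simp: moment_bound_nonneg)
next
  case (Suc k)
  have kk: "\<kappa>1 + \<kappa>2 \<ge> 0" using k1 k2 by simp
  have fixpoint: "f 0 0 + (\<kappa>1 + \<kappa>2) * moment_bound = moment_bound"
    using k by (simp add: moment_bound_def field_simps)
  have "(\<integral>\<^sup>+x. ennreal \<bar>x\<bar> \<partial>mu (Suc k))
      \<le> ennreal (f 0 0) + ennreal (\<kappa>1 + \<kappa>2) * (\<integral>\<^sup>+x. ennreal \<bar>x\<bar> \<partial>mu k)"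
    unfolding mu_Suc by (rule moment_bind_intensity[OF real_distribution_mu])
  also have "\<dots> \<le> ennreal (f 0 0) + ennreal (\<kappa>1 + \<kappa>2) * ennreal moment_bound"
    using Suc by (intro add_left_mono mult_left_mono) auto
  also have "\<dots> = ennreal moment_bound"
    using f_nonneg[of 0 0] kk moment_bound_nonneg
    by (simp only: ennreal_mult'[OF kk, symmetric] ennreal_plus[symmetric] mult_nonneg_nonneg fixpoint)
  finally show ?case .
qed

lemma integral_mu_Phi_iter:
  assumes h: "bounded_lipschitz B L h"
  shows "(\<integral>x. h x \<partial>mu (m + k)) = (\<integral>x. (Phi ^^ k) h x \<partial>mu m)"
proof (induction k arbitrary: m)
  case (Suc k)
  have "(\<integral>x. h x \<partial>mu (m + Suc k)) = (\<integral>x. (Phi ^^ k) h x \<partial>mu (Suc m))"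
    using Suc.IH[of "Suc m"] by simp
  also have "\<dots> = (\<integral>x. Phi ((Phi ^^ k) h) x \<partial>mu m)"
    unfolding mu_Suc
    by (rule integral_bind_intensity[OF real_distribution_mu bounded_lipschitz_Phi_iter[OF h]])
  finally show ?case by simp
qed simp

(* Successive iterates differ by O(\<kappa>^k) on each test function: both integrals equal integrals
   of Phi^k h, against mu 1 and against the point mass at 0. *)
lemma mu_increment_le:
  assumes h: "bounded_lipschitz B L h"
  shows "\<bar>(\<integral>x. h x \<partial>mu (Suc k)) - (\<integral>x. h x \<partial>mu k)\<bar> \<le> (\<kappa>1 + \<kappa>2) ^ k * L * moment_bound"
proof -
  define g where "g = (Phi ^^ k) h"
  have g: "bounded_lipschitz B ((\<kappa>1 + \<kappa>2) ^ k * L) g"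
    unfolding g_def by (rule bounded_lipschitz_Phi_iter[OF h])
  have "(\<integral>x. h x \<partial>mu (Suc k)) = (\<integral>x. g x \<partial>mu 1)"
    using integral_mu_Phi_iter[OF h, of 1 k] by (simp add: g_def)
  moreover have "(\<integral>x. h x \<partial>mu k) = g 0"
    using integral_mu_Phi_iter[OF h, of 0 k] integral_return[of 0 borel g]
      bounded_lipschitz_measurable[OF g] by (simp add: g_def mu_0)
  ultimately show ?thesis
    using integral_deviation_le_moment[OF real_distribution_mu g moment_mu moment_bound_nonneg]
    by simp
qed

lemma weak_limit_mu_invariant:
  assumes r: "strict_mono r" and \<nu>: "real_distribution \<nu>"
    and wc: "weak_conv_m (\<lambda>n. mu (r n)) \<nu>"
  shows "\<nu> \<bind> intensity_kernel = \<nu>"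
proof (rule real_distribution_eqI_bounded_lipschitz[OF real_distribution_bind_intensity[OF \<nu>] \<nu>])
  have conv: "(\<lambda>n. \<integral>x. h x \<partial>mu (r n)) \<longlonglongrightarrow> (\<integral>x. h x \<partial>\<nu>)" if h: "bounded_lipschitz B L h" for B L h
    by (rule weak_conv_imp_integral_bdd_continuous_conv[OF real_distribution_mu \<nu> wc, where B=B])
       (use bounded_lipschitz_isCont[OF h] bounded_lipschitzD(2)[OF h] in auto)
  fix L h assume h: "bounded_lipschitz 1 L h"
  have Phi_h: "bounded_lipschitz 1 ((\<kappa>1 + \<kappa>2) * L) (Phi h)" by (rule bounded_lipschitz_Phi[OF h])
  have "(\<lambda>n. (\<integral>z. Phi h z \<partial>mu (r n)) - (\<integral>z. h z \<partial>mu (r n)))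
      \<longlonglongrightarrow> (\<integral>z. Phi h z \<partial>\<nu>) - (\<integral>z. h z \<partial>\<nu>)"
    by (intro tendsto_diff conv[OF Phi_h] conv[OF h])
  moreover have "(\<lambda>n. (\<integral>z. Phi h z \<partial>mu (r n)) - (\<integral>z. h z \<partial>mu (r n))) \<longlonglongrightarrow> 0"
  proof (rule Lim_null_comparison)
    have "(\<lambda>n. (\<kappa>1 + \<kappa>2) ^ r n) \<longlonglongrightarrow> 0"
      using LIMSEQ_subseq_LIMSEQ[OF kappa_power_tendsto_0 r] by (simp add: comp_def)
    thus "(\<lambda>n. (\<kappa>1 + \<kappa>2) ^ r n * L * moment_bound) \<longlonglongrightarrow> 0"
      by (intro tendsto_mult_left_zero)
    show "\<forall>\<^sub>F n in sequentially.
        norm ((\<integral>z. Phi h z \<partial>mu (r n)) - (\<integral>z. h z \<partial>mu (r n))) \<le> (\<kappa>1 + \<kappa>2) ^ r n * L * moment_bound"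
      using mu_increment_le[OF h] integral_mu_Phi_iter[OF h, where k=1] by (intro always_eventually) simp
  qed
  ultimately have "(\<integral>z. Phi h z \<partial>\<nu>) = (\<integral>z. h z \<partial>\<nu>)"
    using LIMSEQ_unique by fastforce
  thus "(\<integral>z. h z \<partial>(\<nu> \<bind> intensity_kernel)) = (\<integral>z. h z \<partial>\<nu>)"
    by (simp add: integral_bind_intensity[OF \<nu> h])
qed

(* Helly's selection theorem applied to the tight sequence of iterates. *)
lemma invariant_exists:
  "\<exists>\<nu>. real_distribution \<nu> \<and> \<nu> \<bind> intensity_kernel = \<nu> \<and>
       (\<integral>\<^sup>+x. ennreal \<bar>x\<bar> \<partial>\<nu>) \<le> ennreal moment_bound"
proof -
  have "tight mu"
    by (rule tight_if_moment_bounded[OF real_distribution_mu moment_mu moment_bound_nonneg])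
  from tight_imp_convergent_subsubsequence[OF this strict_mono_id] obtain r \<nu>
    where r: "strict_mono r" and \<nu>: "real_distribution \<nu>" and wc: "weak_conv_m (mu \<circ> id \<circ> r) \<nu>"
    by blast
  have wc: "weak_conv_m (\<lambda>n. mu (r n)) \<nu>" using wc by (simp add: comp_def)
  show ?thesis
    using weak_limit_mu_invariant[OF r \<nu> wc] \<nu>
      weak_conv_moment_le[OF real_distribution_mu \<nu> wc moment_mu moment_bound_nonneg] by blast
qed

section \<open>Lifting to the chain of pairs (N, \<lambda>)\<close>

lemma trans_kernel_eq: "trans_kernel f x = state_kernel (next_intensity x)"
  by (simp add: trans_kernel_def state_kernel_def next_intensity_def Let_def)

lemma measurable_trans_kernel: "trans_kernel f \<in> borel \<rightarrow>\<^sub>M subprob_algebra borel"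
  unfolding trans_kernel_eq[abs_def]
  by (rule measurable_compose[OF measurable_next_intensity measurable_state_kernel])

lemma distr_state_kernel_next_intensity:
  "distr (state_kernel s) borel next_intensity = intensity_kernel s"
  unfolding state_kernel_def intensity_kernel_def
  by (subst distr_distr[OF measurable_next_intensity]) (simp_all add: comp_def next_intensity_def)

lemma distr_state_kernel_snd: "distr (state_kernel s) borel snd = return borel s"
  unfolding state_kernel_def
  by (subst distr_distr[OF snd_borel_measurable])
     (simp_all add: comp_def prob_space.distr_const[OF measure_pmf.prob_space_axioms])

lemma state_kernel_bind_trans_kernel:
  "state_kernel s \<bind> trans_kernel f = intensity_kernel s \<bind> state_kernel"
proof -
  have ne: "space (state_kernel s) \<noteq> {}" using prob_space.not_empty[OF prob_space_state_kernel] .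
  have nm: "next_intensity \<in> state_kernel s \<rightarrow>\<^sub>M borel"
    by (rule measurable_borel_sets_cong[OF sets_state_kernel measurable_next_intensity])
  have "state_kernel s \<bind> trans_kernel f = state_kernel s \<bind> (\<lambda>x. state_kernel (next_intensity x))"
    by (simp add: trans_kernel_eq[abs_def])
  also have "\<dots> = distr (state_kernel s) borel next_intensity \<bind> state_kernel"
    by (rule bind_distr[OF nm measurable_state_kernel ne, symmetric])
  finally show ?thesis by (simp add: distr_state_kernel_next_intensity)
qed

lemma stationary_iff:
  "stationary f \<pi> \<longleftrightarrow> prob_space \<pi> \<and> sets \<pi> = sets borel \<and>
     emeasure \<pi> (UNIV \<times> {0..}) = 1 \<and> \<pi> \<bind> trans_kernel f = \<pi>"
proof -
  have "(\<forall>A\<in>sets borel. emeasure \<pi> A = (\<integral>\<^sup>+ x. emeasure (trans_kernel f x) A \<partial>\<pi>))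
      \<longleftrightarrow> \<pi> \<bind> trans_kernel f = \<pi>"
    if p: "prob_space \<pi>" and s: "sets \<pi> = sets borel"
  proof -
    have ne: "space \<pi> \<noteq> {}" using prob_space.not_empty[OF p] .
    have Km: "trans_kernel f \<in> \<pi> \<rightarrow>\<^sub>M subprob_algebra borel"
      by (rule measurable_borel_sets_cong[OF s measurable_trans_kernel])
    have sb: "sets (\<pi> \<bind> trans_kernel f) = sets borel"
      by (rule sets_bind[OF _ ne]) (simp add: trans_kernel_eq)
    have em: "emeasure (\<pi> \<bind> trans_kernel f) A = (\<integral>\<^sup>+ x. emeasure (trans_kernel f x) A \<partial>\<pi>)"
      if "A \<in> sets borel" for A
      by (rule emeasure_bind[OF ne Km that])
    show ?thesis using sb s em by (auto intro: measure_eqI)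
  qed
  thus ?thesis unfolding stationary_def by blast
qed

(* An invariant law of the intensity lives on [0, \<infinity>), since f is nonnegative there. *)
lemma invariant_nonneg:
  assumes \<nu>: "real_distribution \<nu>" and inv: "\<nu> \<bind> intensity_kernel = \<nu>"
  shows "emeasure \<nu> {0..} = 1"
proof -
  interpret real_distribution \<nu> by (rule \<nu>)
  have m: "intensity_kernel \<in> \<nu> \<rightarrow>\<^sub>M subprob_algebra borel"
    by (rule measurable_borel_sets_cong[OF events_eq_borel measurable_intensity_kernel])
  have one: "emeasure (intensity_kernel s) {0..} = 1" for s
  proof -
    have "(\<lambda>n. f (max 0 s) n) -` {0..} \<inter> space (measure_pmf (pois s)) = UNIV"
      using f_nonneg by auto
    thus ?thesis unfolding intensity_kernel_def
      by (subst emeasure_distr) (auto simp: measure_pmf.emeasure_space_1[simplified])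
  qed
  have "emeasure \<nu> {0..} = emeasure (\<nu> \<bind> intensity_kernel) {0..}" using inv by simp
  also have "\<dots> = (\<integral>\<^sup>+s. emeasure (intensity_kernel s) {0..} \<partial>\<nu>)"
    by (rule emeasure_bind[OF not_empty m]) simp
  also have "\<dots> = 1" by (simp add: one emeasure_space_1[simplified space_eq_univ])
  finally show ?thesis .
qed

lemma stationary_lift:
  assumes \<nu>: "real_distribution \<nu>" and inv: "\<nu> \<bind> intensity_kernel = \<nu>"
  shows "stationary f (\<nu> \<bind> state_kernel)"
  unfolding stationary_iff
proof (intro conjI)
  interpret real_distribution \<nu> by (rule \<nu>)
  have Sm: "state_kernel \<in> \<nu> \<rightarrow>\<^sub>M subprob_algebra borel"
    by (rule measurable_borel_sets_cong[OF events_eq_borel measurable_state_kernel])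
  have Im: "intensity_kernel \<in> \<nu> \<rightarrow>\<^sub>M subprob_algebra borel"
    by (rule measurable_borel_sets_cong[OF events_eq_borel measurable_intensity_kernel])
  have closed: "UNIV \<times> {0..} \<in> sets (borel :: (nat \<times> real) measure)"
    by (intro borel_closed closed_Times closed_atLeast closed_UNIV)
  show "prob_space (\<nu> \<bind> state_kernel)"
    by (rule prob_space_bind[OF _ Sm]) (simp add: prob_space_state_kernel)
  show "sets (\<nu> \<bind> state_kernel) = sets borel" by (rule sets_bind) (auto simp: not_empty)
  have "emeasure (\<nu> \<bind> state_kernel) (UNIV \<times> {0..}) = (\<integral>\<^sup>+s. indicator {0..} s \<partial>\<nu>)"
    unfolding emeasure_bind[OF not_empty Sm closed] state_kernel_def
    by (intro nn_integral_cong, subst emeasure_distr)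
       (auto simp: measure_pmf.emeasure_space_1[simplified] closed split: split_indicator)
  also have "\<dots> = 1" using invariant_nonneg[OF \<nu> inv] by simp
  finally show "emeasure (\<nu> \<bind> state_kernel) (UNIV \<times> {0..}) = 1" .
  have "(\<nu> \<bind> state_kernel) \<bind> trans_kernel f = \<nu> \<bind> (\<lambda>s. state_kernel s \<bind> trans_kernel f)"
    by (rule bind_assoc[OF Sm measurable_trans_kernel])
  also have "\<dots> = \<nu> \<bind> (\<lambda>s. intensity_kernel s \<bind> state_kernel)"
    by (simp add: state_kernel_bind_trans_kernel)
  also have "\<dots> = (\<nu> \<bind> intensity_kernel) \<bind> state_kernel"
    by (rule bind_assoc[OF Im measurable_state_kernel, symmetric])
  finally show "(\<nu> \<bind> state_kernel) \<bind> trans_kernel f = \<nu> \<bind> state_kernel" using inv by simp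
qed

(* Conversely, a stationary law of the pair chain is the lift of its second marginal, which is an
   invariant law of the intensity: stationarity forces the marginal to be that of next_intensity. *)
lemma stationary_marginal:
  assumes st: "stationary f \<pi>"
  defines "\<nu> \<equiv> distr \<pi> borel snd"
  shows "real_distribution \<nu>" and "\<nu> \<bind> intensity_kernel = \<nu>" and "\<pi> = \<nu> \<bind> state_kernel"
proof -
  from st have p: "prob_space \<pi>" and s: "sets \<pi> = sets borel" and H: "\<pi> \<bind> trans_kernel f = \<pi>"
    unfolding stationary_iff by auto
  have ne: "space \<pi> \<noteq> {}" using prob_space.not_empty[OF p] .
  have Km: "trans_kernel f \<in> \<pi> \<rightarrow>\<^sub>M subprob_algebra borel"
    by (rule measurable_borel_sets_cong[OF s measurable_trans_kernel])
  have sm: "snd \<in> \<pi> \<rightarrow>\<^sub>M borel" by (rule measurable_borel_sets_cong[OF s snd_borel_measurable])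
  have nm: "next_intensity \<in> \<pi> \<rightarrow>\<^sub>M borel"
    by (rule measurable_borel_sets_cong[OF s measurable_next_intensity])
  show \<nu>: "real_distribution \<nu>"
    unfolding \<nu>_def by (rule real_distributionI) (auto intro: prob_space.prob_space_distr[OF p sm])
  have marginal: "\<nu> = distr \<pi> borel next_intensity"
  proof -
    have "\<nu> = distr (\<pi> \<bind> trans_kernel f) borel snd" unfolding \<nu>_def using H by simp
    also have "\<dots> = \<pi> \<bind> (\<lambda>x. distr (trans_kernel f x) borel snd)"
      by (rule distr_bind[OF Km ne snd_borel_measurable])
    also have "\<dots> = \<pi> \<bind> (\<lambda>x. return borel (next_intensity x))"
      by (simp add: trans_kernel_eq distr_state_kernel_snd)
    also have "\<dots> = distr \<pi> borel next_intensity" by (rule bind_return_distr'[OF ne nm])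
    finally show ?thesis .
  qed
  show lift: "\<pi> = \<nu> \<bind> state_kernel"
  proof -
    have "\<pi> = \<pi> \<bind> (\<lambda>x. state_kernel (next_intensity x))" using H by (simp add: trans_kernel_eq[abs_def])
    also have "\<dots> = distr \<pi> borel next_intensity \<bind> state_kernel"
      by (rule bind_distr[OF nm measurable_state_kernel ne, symmetric])
    finally show ?thesis using marginal by simp
  qed
  interpret real_distribution \<nu> by (rule \<nu>)
  have "\<nu> = distr (\<nu> \<bind> state_kernel) borel next_intensity" using marginal lift by simp
  also have "\<dots> = \<nu> \<bind> (\<lambda>s. distr (state_kernel s) borel next_intensity)"
    by (rule distr_bind[OF measurable_borel_sets_cong[OF events_eq_borel measurable_state_kernel]
          not_empty measurable_next_intensity])
  also have "\<dots> = \<nu> \<bind> intensity_kernel" by (simp add: distr_state_kernel_next_intensity)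
  finally show "\<nu> \<bind> intensity_kernel = \<nu>" by simp
qed

section \<open>The stationary law: moment and point-mass properties\<close>

(* The intensity coordinate of the lift has the law \<nu>, so its mean is at most E|X| under \<nu>. *)
lemma mean_intensity_lift:
  assumes \<nu>: "real_distribution \<nu>"
  shows "(\<integral>\<^sup>+x. ennreal (snd x) \<partial>(\<nu> \<bind> state_kernel)) \<le> (\<integral>\<^sup>+x. ennreal \<bar>x\<bar> \<partial>\<nu>)"
proof -
  interpret real_distribution \<nu> by (rule \<nu>)
  have Sm: "state_kernel \<in> \<nu> \<rightarrow>\<^sub>M subprob_algebra borel"
    by (rule measurable_borel_sets_cong[OF events_eq_borel measurable_state_kernel])
  have sm: "(\<lambda>x. ennreal (snd x)) \<in> borel_measurable (borel :: (nat \<times> real) measure)"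
    using snd_borel_measurable by measurable
  have "(\<integral>\<^sup>+x. ennreal (snd x) \<partial>(\<nu> \<bind> state_kernel))
      = (\<integral>\<^sup>+s. (\<integral>\<^sup>+x. ennreal (snd x) \<partial>state_kernel s) \<partial>\<nu>)"
    by (rule nn_integral_bind[OF sm Sm])
  also have "\<dots> = (\<integral>\<^sup>+s. ennreal s \<partial>\<nu>)"
    unfolding state_kernel_def
    by (intro nn_integral_cong, subst nn_integral_distr)
       (auto simp: measure_pmf.emeasure_space_1[simplified] sm)
  also have "\<dots> \<le> (\<integral>\<^sup>+x. ennreal \<bar>x\<bar> \<partial>\<nu>)" by (intro nn_integral_mono ennreal_leI) simp
  finally show ?thesis .
qed

(* If f(0,0) = 0, the state (0,0) is absorbing. *)
lemma point_mass_stationary: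
  assumes "f 0 0 = 0"
  shows "stationary f (return borel (0, 0))"
  unfolding stationary_iff
proof (intro conjI)
  have "trans_kernel f (0, 0) = distr (return (count_space UNIV) 0) borel (\<lambda>n. (n, 0::real))"
    using assms by (simp add: trans_kernel_eq next_intensity_def state_kernel_def pois_def
        return_pmf.rep_eq)
  also have "\<dots> = return borel (0, 0)" by (subst distr_return) auto
  finally have K0: "trans_kernel f (0, 0) = return borel (0, 0)" .
  show "prob_space (return borel (0::nat, 0::real))" by (rule prob_space_return) simp
  show "sets (return borel (0::nat, 0::real)) = sets borel" by simp
  show "emeasure (return borel (0::nat, 0::real)) (UNIV \<times> {0..}) = 1"
    by (subst emeasure_return) (auto intro: borel_closed closed_Times)
  show "return borel (0::nat, 0::real) \<bind> trans_kernel f = return borel (0, 0)"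
    by (subst bind_return[OF measurable_trans_kernel]) (auto simp: K0)
qed

lemma emeasure_state_kernel_singleton:
  "emeasure (state_kernel r) {(y, l)} = (if r = l then ennreal (pmf (pois l) y) else 0)"
proof -
  have "(\<lambda>n. (n, r)) -` {(y, l)} = (if r = l then {y} else {})" by auto
  thus ?thesis unfolding state_kernel_def
    by (subst emeasure_distr) (simp_all add: emeasure_pmf_single)
qed

(* An atom of full mass would have to be an atom of full mass of the kernel at that state; but
   Poisson(l) with l > 0 charges two points, and for l = 0 the next intensity is f(0,0) > 0. *)
lemma stationary_not_point_mass:
  assumes st: "stationary f \<pi>" and pos: "f 0 0 > 0" and l: "l \<ge> 0"
  shows "measure \<pi> {(y, l)} < 1"
proof (rule ccontr)
  assume "\<not> measure \<pi> {(y, l)} < 1"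
  from st have p: "prob_space \<pi>" and s: "sets \<pi> = sets borel" and H: "\<pi> \<bind> trans_kernel f = \<pi>"
    unfolding stationary_iff by auto
  interpret prob_space \<pi> by (rule p)
  have m1: "measure \<pi> {(y, l)} = 1" using \<open>\<not> _\<close> prob_le_1 by (simp add: not_less antisym)
  have AE: "AE x in \<pi>. x \<in> {(y, l)}" by (rule AE_prob_1[OF m1])
  have e1: "emeasure \<pi> {(y, l)} = 1" using m1 by (simp add: emeasure_eq_measure)
  have sing: "{(y, l)} \<in> sets (borel :: (nat \<times> real) measure)" by simp
  have Km: "trans_kernel f \<in> \<pi> \<rightarrow>\<^sub>M subprob_algebra borel"
    by (rule measurable_borel_sets_cong[OF s measurable_trans_kernel])
  have "1 = emeasure (\<pi> \<bind> trans_kernel f) {(y, l)}" using H e1 by simp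
  also have "\<dots> = (\<integral>\<^sup>+x. emeasure (trans_kernel f x) {(y, l)} \<partial>\<pi>)"
    by (rule emeasure_bind[OF not_empty Km sing])
  also have "\<dots> = (\<integral>\<^sup>+x. emeasure (trans_kernel f (y, l)) {(y, l)} \<partial>\<pi>)"
    by (rule nn_integral_cong_AE) (use AE in auto)
  also have "\<dots> = emeasure (state_kernel (f l y)) {(y, l)}"
    using l by (simp add: emeasure_space_1 trans_kernel_eq next_intensity_def)
  finally have "f l y = l" and py: "pmf (pois l) y = 1"
    by (auto simp: emeasure_state_kernel_singleton split: if_splits)
  thus False using pmf_pois_eq_1[OF l py] pos by simp
qed

end

theorem theorem2p1:
  fixes f :: "real \<Rightarrow> nat \<Rightarrow> real" and \<kappa>1 \<kappa>2 :: real
  assumes f_nonneg: "\<And>l y. l \<ge> 0 \<Longrightarrow> f l y \<ge> 0"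
    and k1: "\<kappa>1 \<ge> 0" and k2: "\<kappa>2 \<ge> 0" and k: "\<kappa>1 + \<kappa>2 < 1"
    and contr: "\<And>l l' y y'. l \<ge> 0 \<Longrightarrow> l' \<ge> 0 \<Longrightarrow>
                  \<bar>f l y - f l' y'\<bar> \<le> \<kappa>1 * \<bar>l - l'\<bar> + \<kappa>2 * \<bar>real y - real y'\<bar>"
  shows "\<exists>\<pi>. stationary f \<pi> \<and> (\<forall>\<pi>'. stationary f \<pi>' \<longrightarrow> \<pi>' = \<pi>) \<and>
           (\<integral>\<^sup>+ x. ennreal (snd x) \<partial>\<pi>) < \<infinity> \<and>
           (f 0 0 = 0 \<longrightarrow> \<pi> = return SS (0, 0)) \<and>
           (f 0 0 > 0 \<longrightarrow> (\<forall>y l. l \<ge> 0 \<longrightarrow> measure \<pi> {(y, l)} < 1))"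
proof -
  interpret poisson_ar f \<kappa>1 \<kappa>2 by unfold_locales (fact f_nonneg k1 k2 k contr)+
  obtain \<nu> where \<nu>: "real_distribution \<nu>" and inv: "\<nu> \<bind> intensity_kernel = \<nu>"
    and mom: "(\<integral>\<^sup>+x. ennreal \<bar>x\<bar> \<partial>\<nu>) \<le> ennreal moment_bound"
    using invariant_exists by blast
  define \<pi> where "\<pi> = \<nu> \<bind> state_kernel"
  have st: "stationary f \<pi>" unfolding \<pi>_def by (rule stationary_lift[OF \<nu> inv])
  have uniq: "\<pi>' = \<pi>" if st': "stationary f \<pi>'" for \<pi>'
  proof -
    note marginal = stationary_marginal[OF st']
    have "distr \<pi>' borel snd = \<nu>" by (rule invariant_unique[OF marginal(1,2) \<nu> inv])
    thus ?thesis using marginal(3) by (simp add: \<pi>_def)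
  qed
  have "(\<integral>\<^sup>+ x. ennreal (snd x) \<partial>\<pi>) \<le> ennreal moment_bound"
    unfolding \<pi>_def using mean_intensity_lift[OF \<nu>] mom by (rule order_trans)
  hence fin: "(\<integral>\<^sup>+ x. ennreal (snd x) \<partial>\<pi>) < \<infinity>"
    by (rule order.strict_trans1) simp
  have point_mass: "f 0 0 = 0 \<longrightarrow> \<pi> = return SS (0, 0)"
    using uniq[OF point_mass_stationary] by auto
  have no_atom: "f 0 0 > 0 \<longrightarrow> (\<forall>y l. l \<ge> 0 \<longrightarrow> measure \<pi> {(y, l)} < 1)"
    using stationary_not_point_mass[OF st] by blast
  show ?thesis using st uniq fin point_mass no_atom by blast
qed

end
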